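(* (1) The set $\{\mathbb{E}_\mathbf{I}\mid\mathbf{I}\in\mathcal{LP}_n\}$ is a complete set (i.e. summing to $1$) of central pairwise orthogonal idempotents of $bH_n(q)$. (2) For all $\mathbf{I},\mathbf{J}\in\mathcal{LP}_n$ one has $\mathbb{E}_\mathbf{I}\operatorname{E}_\mathbf{J}=\mathbb{E}_\mathbf{I}$ if $\mathbf{J}\preceq\mathbf{I}$, and $\mathbb{E}_\mathbf{I}\operatorname{E}_\mathbf{J}=0$ otherwise.
   Context: $\mathbb{S}=\mathbb{C}[q,q^{-1}]$. The tied--boxed Hecke algebra $bH_n(q)$ is the $\mathbb{S}$--algebra presented by generators $e_1,\dots,e_{n-1}$, $z_1,\dots,z_{n-1}$ and relations: $e_i^2=e_i$, $e_ie_j=e_je_i$; $z_iz_jz_i=z_jz_iz_j$ if $|i-j|=1$, $z_iz_j=z_jz_i$ if $|i-j|>1$; $e_iz_i=z_i$; $e_iz_j=z_je_i$; $z_i^2=e_i+(q-q^{-1})z_i$. $\mathcal{LP}_n$ is the set of linear set partitions of $[n]$ (all blocks intervals), ordered by $\mathbf{I}\preceq\mathbf{J}$ iff every block of $\mathbf{J}$ is a union of blocks of $\mathbf{I}$. For $\mathbf{I}\in\mathcal{LP}_n$, $\operatorname{E}_\mathbf{I}=\prod e_i$ over those $i$ with $i,i+1$ in the same block of $\mathbf{I}$. Let $|\mathbf{I}|$ be the number of blocks, $\mu(\mathbf{I},\mathbf{J})=(-1)^{|\mathbf{I}|-|\mathbf{J}|}$ if $\mathbf{I}\preceq\mathbf{J}$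 and $0$ otherwise, and $\mathbb{E}_\mathbf{I}=\sum_{\mathbf{J}\in\mathcal{LP}_n,\ \mathbf{J}\succeq\mathbf{I}}\mu(\mathbf{I},\mathbf{J})\operatorname{E}_\mathbf{J}$. *)

theory Defs
  imports Complex_Main "HOL-Library.Disjoint_Sets"
begin

definition LP :: "nat \<Rightarrow> nat set set set" where
  "LP n = {P. partition_on {1..n} P \<and> (\<forall>B\<in>P. \<exists>a b. B = {a..b})}"

definition lp_le :: "nat set set \<Rightarrow> nat set set \<Rightarrow> bool" where
  "lp_le I J \<longleftrightarrow> (\<forall>B\<in>J. \<exists>C\<subseteq>I. B = \<Union>C)"

definition E_lp :: "nat \<Rightarrow> (nat \<Rightarrow> 'a::ring_1) \<Rightarrow> nat set set \<Rightarrow> 'a" where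
  "E_lp n e I = prod_list (map e (filter (\<lambda>i. \<exists>B\<in>I. i \<in> B \<and> Suc i \<in> B) [1..<n]))"

definition mu_lp :: "nat set set \<Rightarrow> nat set set \<Rightarrow> 'a::ring_1" where
  "mu_lp I J = (if lp_le I J then (-1) ^ (card I - card J) else 0)"

definition EE_lp :: "nat \<Rightarrow> (nat \<Rightarrow> 'a::ring_1) \<Rightarrow> nat set set \<Rightarrow> 'a" where
  "EE_lp n e I = (\<Sum>J\<in>{J\<in>LP n. lp_le I J}. mu_lp I J * E_lp n e J)"

text \<open>Defining relations of the tied-boxed Hecke algebra bH_n(q) for elements e_i, z_i
  (1 \<le> i \<le> n-1) of a ring, with qi the inverse of q.\<close>
definition bH_rels :: "nat \<Rightarrow> 'a::ring_1 \<Rightarrow> 'a \<Rightarrow> (nat \<Rightarrow> 'a) \<Rightarrow> (nat \<Rightarrow> 'a) \<Rightarrow> bool" where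
  "bH_rels n q qi e z \<longleftrightarrow>
     (\<forall>i\<in>{1..<n}. \<forall>j\<in>{1..<n}.
        e i * e i = e i \<and>
        e i * e j = e j * e i \<and>
        ((i = Suc j \<or> j = Suc i) \<longrightarrow> z i * z j * z i = z j * z i * z j) \<and>
        ((Suc i < j \<or> Suc j < i) \<longrightarrow> z i * z j = z j * z i) \<and>
        e i * z i = z i \<and>
        e i * z j = z j * e i \<and>
        z i * z i = e i + (q - qi) * z i)"

text \<open>An S-algebra structure on a ring, S = C[q,q^{-1}]: a ring homomorphism from C into the
  centre together with a central unit q (with inverse qi).\<close>
definition S_algebra :: "(complex \<Rightarrow> 'a::ring_1) \<Rightarrow> 'a \<Rightarrow> 'a \<Rightarrow> bool" where
  "S_algebra phi q qi \<longleftrightarrow>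
     phi 1 = 1 \<and> (\<forall>a b. phi (a + b) = phi a + phi b) \<and> (\<forall>a b. phi (a * b) = phi a * phi b) \<and>
     (\<forall>a x. phi a * x = x * phi a) \<and>
     q * qi = 1 \<and> qi * q = 1 \<and> (\<forall>x. q * x = x * q)"

inductive_set gen_alg :: "nat \<Rightarrow> (complex \<Rightarrow> 'a::ring_1) \<Rightarrow> 'a \<Rightarrow> 'a \<Rightarrow> (nat \<Rightarrow> 'a) \<Rightarrow> (nat \<Rightarrow> 'a) \<Rightarrow> 'a set"
  for n phi q qi e z where
  scal: "phi c \<in> gen_alg n phi q qi e z"
| qq: "q \<in> gen_alg n phi q qi e z"
| qinv: "qi \<in> gen_alg n phi q qi e z"
| gen_e: "i \<in> {1..<n} \<Longrightarrow> e i \<in> gen_alg n phi q qi e z"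
| gen_z: "i \<in> {1..<n} \<Longrightarrow> z i \<in> gen_alg n phi q qi e z"
| add: "x \<in> gen_alg n phi q qi e z \<Longrightarrow> y \<in> gen_alg n phi q qi e z \<Longrightarrow> x + y \<in> gen_alg n phi q qi e z"
| mult: "x \<in> gen_alg n phi q qi e z \<Longrightarrow> y \<in> gen_alg n phi q qi e z \<Longrightarrow> x * y \<in> gen_alg n phi q qi e z"

end

theory Submission
  imports Defs
begin

(* A linear set partition I of [n] is determined by its ties, the positions i with i and i+1 in
   one block, and I |-> ties(I) is an order isomorphism from LP_n onto the subsets of {1..n-1};
   moreover |I| = n - |ties(I)|, since every block contains exactly one non-tie, its maximum.
   Hence E_J is the product of the e_i over the ties of J, and the alternating sum defining EE_I
   is the inclusion-exclusion expansion of the minterm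
     prod_{i tied in I} e_i * prod_{i not tied in I} (1 - e_i)
   of the commuting idempotents e_i. Minterms of commuting idempotents are pairwise orthogonal
   idempotents summing to 1; each absorbs the e_i it contains and kills the others, and commutes
   with everything that commutes with all e_i, in particular with the z_j. *)

definition commuting_idempotents :: "(nat \<Rightarrow> 'a::ring_1) \<Rightarrow> nat set \<Rightarrow> bool" where
  "commuting_idempotents e A \<longleftrightarrow> (\<forall>i\<in>A. e i * e i = e i \<and> (\<forall>j\<in>A. e i * e j = e j * e i))"

lemma commuting_idempotents_idem:
  "commuting_idempotents e A \<Longrightarrow> i \<in> A \<Longrightarrow> e i * e i = e i"
  unfolding commuting_idempotents_def by blast

lemma commuting_idempotents_commute:
  "commuting_idempotents e A \<Longrightarrow> i \<in> A \<Longrightarrow> j \<in> A \<Longrightarrow> e i * e j = e j * e i"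
  unfolding commuting_idempotents_def by blast

lemma commuting_idempotents_subset:
  "commuting_idempotents e A \<Longrightarrow> B \<subseteq> A \<Longrightarrow> commuting_idempotents e B"
  unfolding commuting_idempotents_def by blast

definition minterm :: "(nat \<Rightarrow> 'a::ring_1) \<Rightarrow> nat list \<Rightarrow> nat set \<Rightarrow> 'a" where
  "minterm e xs S = prod_list (map (\<lambda>i. if i \<in> S then e i else 1 - e i) xs)"

lemma minterm_Nil [simp]: "minterm e [] S = 1"
  by (simp add: minterm_def)

lemma minterm_Cons [simp]:
  "minterm e (x # xs) S = (if x \<in> S then e x else 1 - e x) * minterm e xs S"
  by (simp add: minterm_def)

lemma minterm_cong:
  "(\<And>i. i \<in> set xs \<Longrightarrow> i \<in> S \<longleftrightarrow> i \<in> S') \<Longrightarrow> minterm e xs S = minterm e xs S'"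
  unfolding minterm_def by (simp cong: map_cong)

lemma commute_prod_list:
  fixes x :: "'a::monoid_mult"
  assumes "\<And>y. y \<in> set ys \<Longrightarrow> x * y = y * x"
  shows "x * prod_list ys = prod_list ys * x"
  using assms
proof (induction ys)
  case (Cons y ys)
  have "x * prod_list (y # ys) = (x * y) * prod_list ys"
    by (simp add: mult.assoc)
  also have "\<dots> = y * (x * prod_list ys)"
    using Cons.prems by (simp add: mult.assoc)
  also have "\<dots> = prod_list (y # ys) * x"
    using Cons by (simp add: mult.assoc)
  finally show ?case .
qed simp

lemma commute_minterm:
  assumes "\<And>i. i \<in> set xs \<Longrightarrow> x * e i = e i * x"
  shows "x * minterm e xs S = minterm e xs S * x"
  unfolding minterm_def
proof (rule commute_prod_list)
  fix y
  assume "y \<in> set (map (\<lambda>i. if i \<in> S then e i else 1 - e i) xs)"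
  then obtain i where "i \<in> set xs" "y = (if i \<in> S then e i else 1 - e i)"
    by auto
  then show "x * y = y * x"
    using assms by (simp add: right_diff_distrib left_diff_distrib)
qed

lemma minterm_mult_idempotent:
  assumes "commuting_idempotents e (set xs)" "distinct xs" "j \<in> set xs"
  shows "minterm e xs S * e j = (if j \<in> S then minterm e xs S else 0)"
  using assms
proof (induction xs)
  case (Cons x xs)
  show ?case
  proof (cases "j = x")
    case True
    define f where "f = (if x \<in> S then e x else 1 - e x)"
    have "minterm e xs S * e x = e x * minterm e xs S"
      using commuting_idempotents_commute[OF Cons.prems(1)] by (intro commute_minterm[symmetric]) simp
    then have "f * minterm e xs S * e x = (f * e x) * minterm e xs S"
      by (simp only: mult.assoc)
    also have "f * e x = (if x \<in> S then e x else 0)"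
      using commuting_idempotents_idem[OF Cons.prems(1)] by (simp add: f_def left_diff_distrib)
    finally have "f * minterm e xs S * e x = (if x \<in> S then e x * minterm e xs S else 0)"
      by simp
    then show ?thesis
      using True by (simp add: f_def)
  next
    case False
    have "commuting_idempotents e (set xs)"
      using Cons.prems(1) by (rule commuting_idempotents_subset) auto
    with False have "minterm e xs S * e j = (if j \<in> S then minterm e xs S else 0)"
      using Cons.IH Cons.prems(2,3) by simp
    then show ?thesis
      by (simp add: mult.assoc)
  qed
qed simp

lemma minterm_mult_prod_list:
  assumes "commuting_idempotents e (set xs)" "distinct xs" "set ys \<subseteq> set xs"
  shows "minterm e xs S * prod_list (map e ys) = (if set ys \<subseteq> S then minterm e xs S else 0)"
  using assms(3)
proof (induction ys)
  case (Cons y ys)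
  then show ?case
    using minterm_mult_idempotent[OF assms(1,2), of y S] by (simp add: mult.assoc[symmetric])
qed simp

lemma minterm_mult_minterm:
  assumes "commuting_idempotents e (set xs)" "distinct xs" "set ys \<subseteq> set xs"
  shows "minterm e xs S * minterm e ys S' =
    (if \<forall>i\<in>set ys. i \<in> S \<longleftrightarrow> i \<in> S' then minterm e xs S else 0)"
  using assms(3)
proof (induction ys)
  case (Cons y ys)
  have e: "minterm e xs S * e y = (if y \<in> S then minterm e xs S else 0)"
    using Cons.prems by (intro minterm_mult_idempotent[OF assms(1,2)]) simp
  then have "minterm e xs S * (1 - e y) = (if y \<in> S then 0 else minterm e xs S)"
    by (simp add: right_diff_distrib)
  with e Cons show ?case
    by (auto simp: mult.assoc[symmetric])
qed simp

lemma sum_Pow_insert: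
  assumes "finite A" "x \<notin> A"
  shows "(\<Sum>U\<in>Pow (insert x A). f U) = (\<Sum>U\<in>Pow A. f U) + (\<Sum>U\<in>Pow A. f (insert x U))"
proof -
  have "inj_on (insert x) (Pow A)"
    using assms(2) by (auto simp: inj_on_def)
  then show ?thesis
    using assms unfolding Pow_insert by (subst sum.union_disjoint) (auto simp: sum.reindex)
qed

lemma sum_minterm:
  assumes "distinct xs"
  shows "(\<Sum>S\<in>Pow (set xs). minterm e xs S) = 1"
  using assms
proof (induction xs)
  case (Cons x xs)
  have "minterm e xs (insert x S) = minterm e xs S" for S
    using Cons.prems by (intro minterm_cong) auto
  then have "(\<Sum>S\<in>Pow (set (x # xs)). minterm e (x # xs) S) =
      (\<Sum>S\<in>Pow (set xs). (1 - e x) * minterm e xs S) +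
      (\<Sum>S\<in>Pow (set xs). e x * minterm e xs S)"
    using Cons.prems by (simp add: sum_Pow_insert) (intro sum.cong; auto)
  also have "\<dots> =
      (1 - e x) * (\<Sum>S\<in>Pow (set xs). minterm e xs S) + e x * (\<Sum>S\<in>Pow (set xs). minterm e xs S)"
    by (simp only: sum_distrib_left)
  also have "\<dots> = 1"
    using Cons by simp
  finally show ?case .
qed simp

lemma neg_one_power_commute: "(-1::'a::ring_1) ^ k * x = x * (-1) ^ k"
  by (cases "even k") simp_all

definition moebius_sum :: "(nat \<Rightarrow> 'a::ring_1) \<Rightarrow> nat list \<Rightarrow> nat set \<Rightarrow> 'a" where
  "moebius_sum e xs S =
    (\<Sum>U\<in>Pow (set xs - S). (-1) ^ card U * prod_list (map e (filter (\<lambda>i. i \<in> S \<union> U) xs)))"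

lemma moebius_sum_Cons_in:
  assumes "x \<in> S"
  shows "moebius_sum e (x # xs) S = e x * moebius_sum e xs S"
proof -
  have "set (x # xs) - S = set xs - S"
    using assms by auto
  moreover have "(-1) ^ card U * prod_list (map e (filter (\<lambda>i. i \<in> S \<union> U) (x # xs))) =
      e x * ((-1) ^ card U * prod_list (map e (filter (\<lambda>i. i \<in> S \<union> U) xs)))" for U
    using assms by (simp add: neg_one_power_commute[of _ "e x"] mult.assoc[symmetric])
  ultimately show ?thesis
    unfolding moebius_sum_def by (simp add: sum_distrib_left)
qed

lemma moebius_sum_Cons_notin:
  assumes "x \<notin> S" "x \<notin> set xs"
  shows "moebius_sum e (x # xs) S = (1 - e x) * moebius_sum e xs S"
proof -
  define f where "f ys U = (-1) ^ card U * prod_list (map e (filter (\<lambda>i. i \<in> S \<union> U) ys))" for ys U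
  have "f (x # xs) U = f xs U" if "U \<in> Pow (set xs - S)" for U
    using that assms unfolding f_def by auto
  moreover have "f (x # xs) (insert x U) = - (e x * f xs U)" if "U \<in> Pow (set xs - S)" for U
  proof -
    have "finite U" "x \<notin> U"
      using that assms(2) by (auto intro: rev_finite_subset[OF finite_set])
    then have "card (insert x U) = Suc (card U)"
      by simp
    moreover have "filter (\<lambda>i. i \<in> S \<union> insert x U) xs = filter (\<lambda>i. i \<in> S \<union> U) xs"
      using assms(2) by (intro filter_cong) auto
    ultimately show ?thesis
      using assms(1) unfolding f_def by (simp add: neg_one_power_commute[of _ "e x"] mult.assoc[symmetric])
  qed
  ultimately have "(\<Sum>U\<in>Pow (set (x # xs) - S). f (x # xs) U) = (1 - e x) * (\<Sum>U\<in>Pow (set xs - S). f xs U)"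
    using assms
    by (simp add: insert_Diff_if sum_Pow_insert sum_negf sum_distrib_left[symmetric] left_diff_distrib)
  then show ?thesis
    by (simp add: moebius_sum_def f_def)
qed

lemma minterm_eq_moebius_sum:
  "distinct xs \<Longrightarrow> minterm e xs S = moebius_sum e xs S"
proof (induction xs)
  case Nil
  then show ?case
    by (simp add: moebius_sum_def)
next
  case (Cons x xs)
  then show ?case
    by (cases "x \<in> S") (simp_all add: moebius_sum_Cons_in moebius_sum_Cons_notin)
qed

definition lp_ties :: "nat \<Rightarrow> nat set set \<Rightarrow> nat set" where
  "lp_ties n I = {i\<in>{1..<n}. \<exists>B\<in>I. i \<in> B \<and> Suc i \<in> B}"

definition tie_rel :: "nat \<Rightarrow> nat set \<Rightarrow> nat rel" where
  "tie_rel n T = {(i, j). i \<in> {1..n} \<and> j \<in> {1..n} \<and> {min i j..<max i j} \<subseteq> T}"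

definition lp_of_ties :: "nat \<Rightarrow> nat set \<Rightarrow> nat set set" where
  "lp_of_ties n T = {1..n} // tie_rel n T"

lemma LP_partition_on: "I \<in> LP n \<Longrightarrow> partition_on {1..n} I"
  unfolding LP_def by blast

lemma LP_block_interval:
  assumes "I \<in> LP n" "B \<in> I"
  shows "\<exists>a b. a \<le> b \<and> B = {a..b}"
proof -
  obtain a b where "B = {a..b}"
    using assms unfolding LP_def by blast
  moreover have "B \<noteq> {}"
    using partition_onD3[OF LP_partition_on[OF assms(1)]] assms(2) by blast
  ultimately show ?thesis
    by auto
qed

lemma LP_block_subset: "I \<in> LP n \<Longrightarrow> B \<in> I \<Longrightarrow> B \<subseteq> {1..n}"
  unfolding LP_def partition_on_def by blast

lemma LP_block_exists: "I \<in> LP n \<Longrightarrow> x \<in> {1..n} \<Longrightarrow> \<exists>B\<in>I. x \<in> B"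
  unfolding LP_def partition_on_def by blast

lemma LP_block_unique: "I \<in> LP n \<Longrightarrow> B \<in> I \<Longrightarrow> B' \<in> I \<Longrightarrow> x \<in> B \<Longrightarrow> x \<in> B' \<Longrightarrow> B = B'"
  unfolding LP_def partition_on_def disjoint_def by blast

lemma lp_ties_subset: "lp_ties n I \<subseteq> {1..<n}"
  unfolding lp_ties_def by blast

lemma lp_ties_iff_Suc_in_block:
  assumes "I \<in> LP n" "B \<in> I" "i \<in> B"
  shows "i \<in> lp_ties n I \<longleftrightarrow> Suc i \<in> B"
proof
  assume "i \<in> lp_ties n I"
  then obtain B' where "B' \<in> I" "i \<in> B'" "Suc i \<in> B'"
    unfolding lp_ties_def by blast
  then show "Suc i \<in> B"
    using LP_block_unique[OF assms(1) _ assms(2)] assms(3) by blast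
next
  assume "Suc i \<in> B"
  then show "i \<in> lp_ties n I"
    using LP_block_subset[OF assms(1,2)] assms unfolding lp_ties_def by auto
qed

lemma LP_block_extend_by_ties:
  assumes "I \<in> LP n" "B \<in> I" "x \<in> B" "x \<le> y" "{x..<y} \<subseteq> lp_ties n I"
  shows "y \<in> B"
  using assms(4)
proof (induction rule: dec_induct)
  case base
  then show ?case
    using assms(3) .
next
  case (step k)
  then have "k \<in> lp_ties n I"
    using assms(5) by auto
  then show ?case
    using lp_ties_iff_Suc_in_block[OF assms(1,2) step.IH] by blast
qed

lemma LP_same_block_iff:
  assumes I: "I \<in> LP n" and "x \<in> {1..n}" "y \<in> {1..n}"
  shows "(\<exists>B\<in>I. x \<in> B \<and> y \<in> B) \<longleftrightarrow> {min x y..<max x y} \<subseteq> lp_ties n I"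
proof
  assume "\<exists>B\<in>I. x \<in> B \<and> y \<in> B"
  then obtain B a b where B: "B \<in> I" "x \<in> B" "y \<in> B" "B = {a..b}"
    using LP_block_interval[OF I] by blast
  show "{min x y..<max x y} \<subseteq> lp_ties n I"
  proof
    fix k
    assume "k \<in> {min x y..<max x y}"
    then have "k \<in> B" "Suc k \<in> B"
      using B by auto
    then show "k \<in> lp_ties n I"
      using lp_ties_iff_Suc_in_block[OF I B(1)] by blast
  qed
next
  assume ties: "{min x y..<max x y} \<subseteq> lp_ties n I"
  obtain B where B: "B \<in> I" "min x y \<in> B"
    using LP_block_exists[OF I] assms(2,3) by (metis min_def)
  then have "max x y \<in> B"
    using LP_block_extend_by_ties[OF I B _ ties] by simp
  then show "\<exists>B\<in>I. x \<in> B \<and> y \<in> B"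
    using B by (metis max_def min_def)
qed

lemma tie_rel_lp_ties:
  assumes "I \<in> LP n"
  shows "tie_rel n (lp_ties n I) = {(x, y). \<exists>B\<in>I. x \<in> B \<and> y \<in> B}"
  using LP_same_block_iff[OF assms] LP_block_subset[OF assms] unfolding tie_rel_def by blast

lemma lp_of_ties_lp_ties: "I \<in> LP n \<Longrightarrow> lp_of_ties n (lp_ties n I) = I"
  unfolding lp_of_ties_def tie_rel_lp_ties by (intro partition_on_eq_quotient LP_partition_on)

lemma equiv_tie_rel: "equiv {1..n} (tie_rel n T)"
proof (rule equivI)
  show "trans (tie_rel n T)"
  proof (rule transI)
    fix i j k
    assume "(i, j) \<in> tie_rel n T" "(j, k) \<in> tie_rel n T"
    moreover have "{min i k..<max i k} \<subseteq> {min i j..<max i j} \<union> {min j k..<max j k}"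
      by auto
    ultimately show "(i, k) \<in> tie_rel n T"
      unfolding tie_rel_def by blast
  qed
qed (auto simp: tie_rel_def refl_on_def sym_def min.commute max.commute)

lemma lp_ties_lp_of_ties:
  assumes "T \<subseteq> {1..<n}"
  shows "lp_ties n (lp_of_ties n T) = T"
proof -
  have "i \<in> lp_ties n (lp_of_ties n T) \<longleftrightarrow> i \<in> T" if i: "i \<in> {1..<n}" for i
  proof -
    have "(\<exists>X\<in>lp_of_ties n T. i \<in> X \<and> Suc i \<in> X) \<longleftrightarrow> (i, Suc i) \<in> tie_rel n T"
    proof
      assume "\<exists>X\<in>lp_of_ties n T. i \<in> X \<and> Suc i \<in> X"
      then show "(i, Suc i) \<in> tie_rel n T"
        unfolding lp_of_ties_def by (blast intro: in_quotient_imp_in_rel[OF equiv_tie_rel])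
    next
      assume "(i, Suc i) \<in> tie_rel n T"
      moreover have "i \<in> tie_rel n T `` {i}"
        using i by (intro equiv_class_self[OF equiv_tie_rel]) simp
      moreover have "tie_rel n T `` {i} \<in> lp_of_ties n T"
        using i unfolding lp_of_ties_def by (intro quotientI) simp
      ultimately show "\<exists>X\<in>lp_of_ties n T. i \<in> X \<and> Suc i \<in> X"
        by blast
    qed
    also have "\<dots> \<longleftrightarrow> i \<in> T"
      using i by (auto simp: tie_rel_def)
    finally show ?thesis
      using i unfolding lp_ties_def by blast
  qed
  then show ?thesis
    using assms lp_ties_subset by blast
qed

lemma lp_of_ties_block_interval:
  assumes X: "X \<in> lp_of_ties n T"
  shows "X = {Min X..Max X}"
proof -
  have sub: "X \<subseteq> {1..n}" and "X \<noteq> {}"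
    using X in_quotient_imp_subset[OF equiv_tie_rel] in_quotient_imp_non_empty[OF equiv_tie_rel]
    unfolding lp_of_ties_def by blast+
  then have fin: "finite X" "X \<noteq> {}"
    using finite_subset[OF sub] by auto
  then have Min: "Min X \<in> X" and "Max X \<in> X"
    by simp_all
  then have "(Min X, Max X) \<in> tie_rel n T"
    using X unfolding lp_of_ties_def by (intro in_quotient_imp_in_rel[OF equiv_tie_rel]) auto
  then have ties: "{Min X..<Max X} \<subseteq> T"
    using fin by (simp add: tie_rel_def)
  have "{Min X..Max X} \<subseteq> X"
  proof
    fix j
    assume "j \<in> {Min X..Max X}"
    then have j: "Min X \<le> j" "j \<le> Max X"
      by simp_all
    have "j \<in> {1..n}"
      using j sub Min \<open>Max X \<in> X\<close> by force
    moreover have "{min (Min X) j..<max (Min X) j} \<subseteq> T"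
      using j ties by (auto simp: min_absorb1 max_absorb2)
    ultimately have "(Min X, j) \<in> tie_rel n T"
      using sub Min unfolding tie_rel_def by blast
    with X Min show "j \<in> X"
      unfolding lp_of_ties_def by (rule in_quotient_imp_closed[OF equiv_tie_rel])
  qed
  then show ?thesis
    using fin by (auto intro: Min_le Max_ge)
qed

lemma lp_of_ties_in_LP: "lp_of_ties n T \<in> LP n"
  unfolding LP_def
proof (intro CollectI conjI ballI)
  show "partition_on {1..n} (lp_of_ties n T)"
    unfolding lp_of_ties_def by (rule partition_on_quotient[OF equiv_tie_rel])
  show "\<exists>a b. X = {a..b}" if "X \<in> lp_of_ties n T" for X
    using lp_of_ties_block_interval[OF that] by blast
qed

lemma bij_betw_lp_ties: "bij_betw (lp_ties n) (LP n) (Pow {1..<n})"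
  by (rule bij_betw_byWitness[where f' = "lp_of_ties n"])
    (auto simp: lp_of_ties_lp_ties lp_ties_lp_of_ties lp_of_ties_in_LP dest: subsetD[OF lp_ties_subset])

lemma lp_ties_mono:
  assumes I: "I \<in> LP n" and J: "J \<in> LP n" and le: "lp_le I J"
  shows "lp_ties n I \<subseteq> lp_ties n J"
proof
  fix i
  assume "i \<in> lp_ties n I"
  then obtain B where i: "i \<in> {1..<n}" and B: "B \<in> I" "i \<in> B" "Suc i \<in> B"
    unfolding lp_ties_def by blast
  obtain B' where B': "B' \<in> J" "i \<in> B'"
    using LP_block_exists[OF J, of i] i by auto
  obtain C where "C \<subseteq> I" "B' = \<Union>C"
    using le B'(1) unfolding lp_le_def by blast
  then obtain B'' where "B'' \<in> I" "i \<in> B''" "B'' \<subseteq> B'"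
    using B'(2) by blast
  then have "B \<subseteq> B'"
    using LP_block_unique[OF I B(1) _ B(2)] by blast
  then show "i \<in> lp_ties n J"
    using i B B' unfolding lp_ties_def by blast
qed

lemma lp_le_if_lp_ties_subset:
  assumes I: "I \<in> LP n" and J: "J \<in> LP n" and ties: "lp_ties n I \<subseteq> lp_ties n J"
  shows "lp_le I J"
  unfolding lp_le_def
proof
  fix B'
  assume B': "B' \<in> J"
  have block_subset: "B \<subseteq> B'" if B: "B \<in> I" "x \<in> B" "x \<in> B'" for B x
  proof
    fix y
    assume "y \<in> B"
    have xy: "x \<in> {1..n}" "y \<in> {1..n}"
      using LP_block_subset[OF I B(1)] B(2) \<open>y \<in> B\<close> by auto
    then have "{min x y..<max x y} \<subseteq> lp_ties n I"
      using LP_same_block_iff[OF I xy] B(1,2) \<open>y \<in> B\<close> by blast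
    then obtain B'' where "B'' \<in> J" "x \<in> B''" "y \<in> B''"
      using LP_same_block_iff[OF J xy] ties by blast
    then show "y \<in> B'"
      using LP_block_unique[OF J B'] B(3) by blast
  qed
  have "B' \<subseteq> \<Union>{B\<in>I. B \<subseteq> B'}"
  proof
    fix x
    assume "x \<in> B'"
    moreover obtain B where "B \<in> I" "x \<in> B"
      using LP_block_exists[OF I] LP_block_subset[OF J B'] \<open>x \<in> B'\<close> by blast
    ultimately show "x \<in> \<Union>{B\<in>I. B \<subseteq> B'}"
      using block_subset by blast
  qed
  then have "B' = \<Union>{B\<in>I. B \<subseteq> B'}"
    by blast
  then show "\<exists>C\<subseteq>I. B' = \<Union>C"
    by (intro exI[of _ "{B\<in>I. B \<subseteq> B'}"]) blast
qed

lemma lp_le_iff_lp_ties_subset: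
  "I \<in> LP n \<Longrightarrow> J \<in> LP n \<Longrightarrow> lp_le I J \<longleftrightarrow> lp_ties n I \<subseteq> lp_ties n J"
  using lp_ties_mono lp_le_if_lp_ties_subset by blast

lemma LP_block_Max:
  assumes "I \<in> LP n" "B \<in> I"
  shows "Max B \<in> B \<and> (\<forall>i\<in>B. i = Max B \<longleftrightarrow> Suc i \<notin> B)"
proof -
  obtain a b where ab: "a \<le> b" "B = {a..b}"
    using LP_block_interval[OF assms] by blast
  moreover have "Max {a..b} = b"
    using ab(1) by (intro Max_eqI) auto
  ultimately show ?thesis
    by auto
qed

lemma Max_image_LP:
  assumes I: "I \<in> LP n"
  shows "Max ` I = {1..n} - lp_ties n I"
proof
  show "Max ` I \<subseteq> {1..n} - lp_ties n I"
  proof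
    fix i
    assume "i \<in> Max ` I"
    then obtain B where B: "B \<in> I" "i = Max B"
      by blast
    then have "i \<in> B" "Suc i \<notin> B"
      using LP_block_Max[OF I B(1)] by blast+
    then show "i \<in> {1..n} - lp_ties n I"
      using lp_ties_iff_Suc_in_block[OF I B(1)] LP_block_subset[OF I B(1)] by blast
  qed
  show "{1..n} - lp_ties n I \<subseteq> Max ` I"
  proof
    fix i
    assume i: "i \<in> {1..n} - lp_ties n I"
    then obtain B where B: "B \<in> I" "i \<in> B"
      using LP_block_exists[OF I] by blast
    then have "i = Max B"
      using lp_ties_iff_Suc_in_block[OF I B] LP_block_Max[OF I B(1)] i by blast
    then show "i \<in> Max ` I"
      using B(1) by blast
  qed
qed

lemma card_blocks_LP:
  assumes I: "I \<in> LP n"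
  shows "card I = n - card (lp_ties n I)"
proof -
  have "inj_on Max I"
  proof (rule inj_onI)
    fix B B'
    assume "B \<in> I" "B' \<in> I" "Max B = Max B'"
    then show "B = B'"
      using LP_block_unique[OF I] LP_block_Max[OF I] by metis
  qed
  then have "card I = card (Max ` I)"
    by (simp add: card_image)
  also have "\<dots> = card ({1..n} - lp_ties n I)"
    by (simp only: Max_image_LP[OF I])
  also have "\<dots> = n - card (lp_ties n I)"
    using lp_ties_subset[of n I] by (subst card_Diff_subset) (auto intro: finite_subset)
  finally show ?thesis .
qed

lemma E_lp_eq: "E_lp n e J = prod_list (map e (filter (\<lambda>i. i \<in> lp_ties n J) [1..<n]))"
  unfolding E_lp_def lp_ties_def
  by (rule arg_cong[where f = "\<lambda>xs. prod_list (map e xs)"], rule filter_cong) auto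

lemma mu_lp_eq_card_ties:
  assumes I: "I \<in> LP n" and J: "J \<in> LP n" and "lp_le I J"
  shows "mu_lp I J = (-1) ^ card (lp_ties n J - lp_ties n I)"
proof -
  have sub: "lp_ties n I \<subseteq> lp_ties n J"
    using assms lp_le_iff_lp_ties_subset by blast
  have fin: "finite (lp_ties n J)"
    using lp_ties_subset finite_subset by blast
  have "card (lp_ties n J) \<le> n"
    using card_mono[OF _ lp_ties_subset[of n J]] by simp
  moreover have "card (lp_ties n I) \<le> card (lp_ties n J)"
    using card_mono[OF fin sub] .
  ultimately have "card I - card J = card (lp_ties n J - lp_ties n I)"
    using card_blocks_LP[OF I] card_blocks_LP[OF J] card_Diff_subset[OF finite_subset[OF sub fin] sub]
    by simp
  then show ?thesis
    using assms(3) by (simp add: mu_lp_def)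
qed

lemma EE_lp_eq_minterm:
  assumes I: "I \<in> LP n"
  shows "EE_lp n e I = minterm e [1..<n] (lp_ties n I)"
proof -
  let ?S = "lp_ties n I"
  have "EE_lp n e I = moebius_sum e [1..<n] ?S"
    unfolding EE_lp_def moebius_sum_def set_upt
  proof (rule sum.reindex_bij_witness[where i = "\<lambda>U. lp_of_ties n (?S \<union> U)" and j = "\<lambda>J. lp_ties n J - ?S"])
    fix J
    assume "J \<in> {J \<in> LP n. lp_le I J}"
    then have J: "J \<in> LP n" "lp_le I J"
      by simp_all
    then have un: "?S \<union> (lp_ties n J - ?S) = lp_ties n J"
      using lp_le_iff_lp_ties_subset[OF I] by blast
    show "lp_of_ties n (?S \<union> (lp_ties n J - ?S)) = J"
      using lp_of_ties_lp_ties[OF J(1)] un by simp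
    show "lp_ties n J - ?S \<in> Pow ({1..<n} - ?S)"
      using lp_ties_subset[of n J] by blast
    show "(-1) ^ card (lp_ties n J - ?S) *
        prod_list (map e (filter (\<lambda>i. i \<in> ?S \<union> (lp_ties n J - ?S)) [1..<n])) = mu_lp I J * E_lp n e J"
      using un by (simp add: E_lp_eq mu_lp_eq_card_ties[OF I J])
  next
    fix U
    assume U: "U \<in> Pow ({1..<n} - ?S)"
    then have sub: "?S \<union> U \<subseteq> {1..<n}"
      using lp_ties_subset by blast
    then show "lp_ties n (lp_of_ties n (?S \<union> U)) - ?S = U"
      using lp_ties_lp_of_ties U by auto
    show "lp_of_ties n (?S \<union> U) \<in> {J \<in> LP n. lp_le I J}"
      using lp_of_ties_in_LP lp_le_iff_lp_ties_subset[OF I lp_of_ties_in_LP] lp_ties_lp_of_ties[OF sub]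
      by simp
  qed
  then show ?thesis
    by (simp add: minterm_eq_moebius_sum)
qed

lemma EE_lp_mult_E_lp:
  assumes "commuting_idempotents e {1..<n}" "I \<in> LP n" "J \<in> LP n"
  shows "EE_lp n e I * E_lp n e J = (if lp_le J I then EE_lp n e I else 0)"
proof -
  have "set (filter (\<lambda>i. i \<in> lp_ties n J) [1..<n]) = lp_ties n J"
    using lp_ties_subset[of n J] by auto
  then show ?thesis
    using minterm_mult_prod_list[of e "[1..<n]" "filter (\<lambda>i. i \<in> lp_ties n J) [1..<n]" "lp_ties n I"]
      assms lp_le_iff_lp_ties_subset[OF assms(3,2)] lp_ties_subset[of n J]
    by (simp add: EE_lp_eq_minterm E_lp_eq)
qed

lemma EE_lp_mult_EE_lp:
  assumes "commuting_idempotents e {1..<n}" "I \<in> LP n" "J \<in> LP n"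
  shows "EE_lp n e I * EE_lp n e J = (if I = J then EE_lp n e I else 0)"
proof -
  have "(\<forall>i\<in>{1..<n}. i \<in> lp_ties n I \<longleftrightarrow> i \<in> lp_ties n J) \<longleftrightarrow> lp_ties n I = lp_ties n J"
    using lp_ties_subset by blast
  also have "\<dots> \<longleftrightarrow> I = J"
    using bij_betw_imp_inj_on[OF bij_betw_lp_ties] assms(2,3) by (auto dest: inj_onD)
  finally show ?thesis
    using minterm_mult_minterm[of e "[1..<n]" "[1..<n]" "lp_ties n I" "lp_ties n J"] assms
    by (simp add: EE_lp_eq_minterm)
qed

lemma sum_EE_lp: "(\<Sum>I\<in>LP n. EE_lp n e I) = 1"
proof -
  have "(\<Sum>I\<in>LP n. EE_lp n e I) = (\<Sum>I\<in>LP n. minterm e [1..<n] (lp_ties n I))"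
    by (simp add: EE_lp_eq_minterm)
  also have "\<dots> = (\<Sum>S\<in>Pow {1..<n}. minterm e [1..<n] S)"
    by (rule sum.reindex_bij_betw[OF bij_betw_lp_ties])
  also have "\<dots> = 1"
    using sum_minterm[of "[1..<n]" e] by simp
  finally show ?thesis .
qed

lemma S_algebra_inverse_commute:
  assumes "S_algebra phi q qi"
  shows "qi * x = x * qi"
proof -
  have q: "q * qi = 1" "qi * q = 1" "q * x = x * q"
    using assms unfolding S_algebra_def by auto
  have "qi * x = qi * (x * q) * qi"
    using q(1) by (simp add: mult.assoc)
  also have "\<dots> = (qi * q) * x * qi"
    using q(3) by (simp add: mult.assoc)
  also have "\<dots> = x * qi"
    using q(2) by simp
  finally show ?thesis .
qed

lemma gen_alg_commute:
  assumes "S_algebra phi q qi"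
    and "\<And>i. i \<in> {1..<n} \<Longrightarrow> c * e i = e i * c"
    and "\<And>i. i \<in> {1..<n} \<Longrightarrow> c * z i = z i * c"
    and "x \<in> gen_alg n phi q qi e z"
  shows "c * x = x * c"
  using assms(4)
proof induction
  case (scal a)
  then show ?case
    using assms(1) by (simp add: S_algebra_def)
next
  case qq
  then show ?case
    using assms(1) by (simp add: S_algebra_def)
next
  case qinv
  then show ?case
    using S_algebra_inverse_commute[OF assms(1)] by simp
next
  case (add x y)
  then show ?case
    by (simp add: distrib_left distrib_right)
next
  case (mult x y)
  have "c * (x * y) = x * (c * y)"
    using mult.IH(1) by (simp add: mult.assoc[symmetric])
  then show ?case
    using mult.IH(2) by (simp add: mult.assoc)
qed (use assms(2,3) in simp_all)

lemma bH_rels_commuting_idempotents: "bH_rels n q qi e z \<Longrightarrow> commuting_idempotents e {1..<n}"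
  unfolding bH_rels_def commuting_idempotents_def by blast

lemma EE_lp_central:
  assumes "S_algebra phi q qi" "bH_rels n q qi e z" "I \<in> LP n" "x \<in> gen_alg n phi q qi e z"
  shows "EE_lp n e I * x = x * EE_lp n e I"
proof -
  have e: "e j * e i = e i * e j" and ez: "e j * z i = z i * e j" if "i \<in> {1..<n}" "j \<in> {1..<n}" for i j
    using assms(2) that unfolding bH_rels_def by blast+
  show ?thesis
    unfolding EE_lp_eq_minterm[OF assms(3)]
  proof (rule gen_alg_commute[OF assms(1) _ _ assms(4)])
    fix i
    assume "i \<in> {1..<n}"
    then show "minterm e [1..<n] (lp_ties n I) * e i = e i * minterm e [1..<n] (lp_ties n I)"
      and "minterm e [1..<n] (lp_ties n I) * z i = z i * minterm e [1..<n] (lp_ties n I)"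
      using e ez by (auto intro!: commute_minterm[symmetric])
  qed
qed

theorem proposition5p8:
  fixes n :: nat and phi :: "complex \<Rightarrow> 'a::ring_1" and q qi :: 'a and e z :: "nat \<Rightarrow> 'a"
  assumes "S_algebra phi q qi"
    and "bH_rels n q qi e z"
  shows "(\<forall>I\<in>LP n. EE_lp n e I * EE_lp n e I = EE_lp n e I)
       \<and> (\<forall>I\<in>LP n. \<forall>J\<in>LP n. I \<noteq> J \<longrightarrow> EE_lp n e I * EE_lp n e J = 0)
       \<and> (\<forall>I\<in>LP n. \<forall>x\<in>gen_alg n phi q qi e z. EE_lp n e I * x = x * EE_lp n e I)
       \<and> (\<Sum>I\<in>LP n. EE_lp n e I) = 1
       \<and> (\<forall>I\<in>LP n. \<forall>J\<in>LP n.
            EE_lp n e I * E_lp n e J = (if lp_le J I then EE_lp n e I else 0))"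
proof -
  have idem: "commuting_idempotents e {1..<n}"
    using assms(2) by (rule bH_rels_commuting_idempotents)
  show ?thesis
    using EE_lp_mult_EE_lp[OF idem] EE_lp_central[OF assms] sum_EE_lp EE_lp_mult_E_lp[OF idem]
    by simp
qed

end
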